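(* Let $n>3$ and let $G_n$ be the directed graph with nodes $0,\dots,n-1$ and arcs $i\to i+1$ for $0\le i\le n-2$, $j\to 0$ for $1\le j\le n-1$, and $0\to n-1$. Let $\pi\in S_n$ and $\rho=\pi^{-1}$. The following are equivalent: (1) $\rho(0)<\rho(n-1)<\rho(1)$ or $\rho(1)<\rho(n-1)<\rho(0)$; (2) there is no $\mathbf y\in\mathbb{R}^{n-1}$ with $(\Xi R_\pi C_{G_n})^T\mathbf y=\mathbf 0$, $\mathbf y\ge\mathbf 0$ and $\mathbf y\ne\mathbf 0$.
   Context: $d_G(x,y)$ is the shortest directed path length from $x$ to $y$ ($\infty$ if none). The distance-count matrix $C_G\in\mathbb{R}^{n\times n}$ has $(C_G)_{i,k}=|\{j: d_G(j,i)=k\}|$ (indices from 0). $R_\pi$ is the $n\times n$ 0/1 matrix with $(R_\pi)_{ij}=1$ iff $\pi(i)=j$. $\Xi\in\mathbb{R}^{(n-1)\times n}$ has $\Xi_{i,i}=-1$, $\Xi_{i,i+1}=1$ for $0\le i\le n-2$, and all other entries $0$. Vector inequalities are entrywise. *)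

theory Defs
  imports "Jordan_Normal_Form.Matrix" "HOL-Library.Extended_Nat" "HOL-Combinatorics.Permutations"
begin

definition Gn_arcs :: "nat \<Rightarrow> (nat \<times> nat) set" where
  "Gn_arcs n = {(i, i+1) | i. i + 2 \<le> n} \<union> {(j, 0) | j. 1 \<le> j \<and> j \<le> n - 1} \<union> {(0, n - 1)}"

definition dist_G :: "(nat \<times> nat) set \<Rightarrow> nat \<Rightarrow> nat \<Rightarrow> enat" where
  "dist_G E x y = (if \<exists>k. (x, y) \<in> E ^^ k then enat (LEAST k. (x, y) \<in> E ^^ k) else \<infinity>)"

definition dist_count_mat :: "nat \<Rightarrow> (nat \<times> nat) set \<Rightarrow> real mat" where
  "dist_count_mat n E = mat n n (\<lambda>(i, k). real (card {j. j < n \<and> dist_G E j i = enat k}))"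

definition perm_mat :: "nat \<Rightarrow> (nat \<Rightarrow> nat) \<Rightarrow> real mat" where
  "perm_mat n \<pi> = mat n n (\<lambda>(i, j). if \<pi> i = j then 1 else 0)"

definition Xi_mat :: "nat \<Rightarrow> real mat" where
  "Xi_mat n = mat (n - 1) n (\<lambda>(i, j). if j = i then -1 else if j = i + 1 then 1 else 0)"

end

theory Submission
  imports Defs
begin

(* Distances in G_n are explicit,
   and the distance-count matrix C has a one-dimensional left null space, spanned by
   c = e_0 + (n - 3) e_1 - (n - 2) e_(n-1). Since R_pi^T only permutes coordinates and Xi^T y
   is the backward difference of y, the kernel consists of the vectors y_b = t S(b), where
   S(b) = c(pi 0) + ... + c(pi b) is a step function jumping by 1, n - 3 and -(n - 2) at
   rho(0), rho(1) and rho(n-1). S takes both signs exactly when rho(n-1) lies between rho(0)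
   and rho(1); otherwise a suitable multiple of S is nonnegative and nonzero. *)

lemma dist_G_eqI:
  assumes "(x, y) \<in> E ^^ d" and "\<And>k. (x, y) \<in> E ^^ k \<Longrightarrow> d \<le> k"
  shows "dist_G E x y = enat d"
  using assms unfolding dist_G_def by (auto intro!: Least_equality)

(* Only the chain arcs enter 1, ..., n - 2, so a walk to such an i ends by climbing from j
   (if j <= i) or from 0. *)
definition Gn_dist :: "nat \<Rightarrow> nat \<Rightarrow> nat \<Rightarrow> nat" where
  "Gn_dist n j i =
     (if i = 0 then (if j = 0 then 0 else 1)
      else if i = n - 1 then (if j = n - 1 then 0 else if j = 0 \<or> j = n - 2 then 1 else 2)
      else if j \<le> i then i - j else i + 1)"

lemma Gn_dist_arc_le:
  assumes "3 < n" "(m, i) \<in> Gn_arcs n" "j < n"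
  shows "Gn_dist n j i \<le> Gn_dist n j m + 1"
  using assms unfolding Gn_arcs_def Gn_dist_def by auto

lemma Gn_dist_le_walk:
  assumes "3 < n" "j < n" "(j, i) \<in> Gn_arcs n ^^ k"
  shows "Gn_dist n j i \<le> k"
  using assms(3)
proof (induction k arbitrary: i)
  case 0
  then show ?case by (simp add: Gn_dist_def)
next
  case (Suc k)
  then obtain m where "(j, m) \<in> Gn_arcs n ^^ k" "(m, i) \<in> Gn_arcs n" by auto
  with Suc.IH Gn_dist_arc_le[OF assms(1) _ assms(2)] show ?case by fastforce
qed

lemma Gn_arcs_relpow_chain: "j + d < n \<Longrightarrow> (j, j + d) \<in> Gn_arcs n ^^ d"
  by (induction d) (auto simp: Gn_arcs_def)

lemma relpow_Gn_dist:
  assumes "3 < n" "j < n" "i < n"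
  shows "(j, i) \<in> Gn_arcs n ^^ Gn_dist n j i"
proof -
  let ?E = "Gn_arcs n"
  have to_0: "(j, 0) \<in> ?E" if "j \<noteq> 0" using that assms unfolding Gn_arcs_def by auto
  have to_last: "(0, n - 1) \<in> ?E" "(n - 2, n - 1) \<in> ?E" using assms unfolding Gn_arcs_def by auto
  have "(j, n - 1) \<in> ?E ^^ 2" if "j \<noteq> 0"
    using to_0[OF that] to_last(1) by (auto simp: numeral_2_eq_2 intro: relpow_Suc_I2)
  moreover have "(j, i) \<in> ?E ^^ Suc i" if "j \<noteq> 0"
    using relpow_Suc_I2[OF to_0[OF that], of i] Gn_arcs_relpow_chain[of 0 i n] assms by simp
  moreover have "(j, i) \<in> ?E ^^ (i - j)" if "j \<le> i"
    using Gn_arcs_relpow_chain[of j "i - j" n] that assms by simp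
  ultimately show ?thesis
    using to_0 to_last assms by (auto simp: Gn_dist_def)
qed

lemma dist_G_Gn_arcs:
  assumes "3 < n" "j < n" "i < n"
  shows "dist_G (Gn_arcs n) j i = enat (Gn_dist n j i)"
  using assms by (intro dist_G_eqI relpow_Gn_dist Gn_dist_le_walk)

definition Gn_count :: "nat \<Rightarrow> nat \<Rightarrow> nat \<Rightarrow> nat" where
  "Gn_count n i k =
     (if i = 0 then (if k = 0 then 1 else if k = 1 then n - 1 else 0)
      else if i = n - 1 then (if k = 0 then 1 else if k = 1 then 2 else if k = 2 then n - 3 else 0)
      else if k \<le> i then 1 else if k = i + 1 then n - 1 - i else 0)"

lemma Gn_dist_fibre:
  assumes "3 < n" "i < n"
  shows "{j. j < n \<and> Gn_dist n j i = k} =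
    (if i = 0 then (if k = 0 then {0} else if k = 1 then {1..<n} else {})
     else if i = n - 1 then
       (if k = 0 then {n - 1} else if k = 1 then {0, n - 2} else if k = 2 then {1..<n - 2} else {})
     else if k \<le> i then {i - k} else if k = i + 1 then {i + 1..<n} else {})"
  using assms by (auto simp: Gn_dist_def)

lemma card_Gn_dist_fibre:
  assumes "3 < n" "i < n"
  shows "card {j. j < n \<and> Gn_dist n j i = k} = Gn_count n i k"
  using assms by (simp add: Gn_dist_fibre Gn_count_def)

lemma dist_count_mat_Gn_arcs:
  assumes "3 < n" "i < n" "k < n"
  shows "dist_count_mat n (Gn_arcs n) $$ (i, k) = real (Gn_count n i k)"
  using assms by (simp add: dist_count_mat_def dist_G_Gn_arcs card_Gn_dist_fibre[symmetric] cong: conj_cong)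

definition Gn_null :: "nat \<Rightarrow> nat \<Rightarrow> real" where
  "Gn_null n v = of_bool (v = 0) + (real n - 3) * of_bool (v = 1) - (real n - 2) * of_bool (v = n - 1)"

lemma sum_Gn_null_mult:
  assumes "3 < n"
  shows "(\<Sum>v<n. Gn_null n v * X v) = X 0 + (real n - 3) * X 1 - (real n - 2) * X (n - 1)"
proof -
  have "(\<Sum>v<n. Gn_null n v * X v) = (\<Sum>v<n. (if v = 0 then X 0 else 0)
      + (real n - 3) * (if v = 1 then X 1 else 0) - (real n - 2) * (if v = n - 1 then X (n - 1) else 0))"
    using assms by (intro sum.cong) (auto simp: Gn_null_def algebra_simps)
  then show ?thesis
    using assms by (simp add: sum.distrib sum_subtractf sum_distrib_left[symmetric])
qed

lemma sum_Gn_null_mult_Gn_count: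
  assumes "3 < n"
  shows "(\<Sum>v<n. Gn_null n v * real (Gn_count n v k)) = 0"
proof -
  have "k = 0 \<or> k = 1 \<or> k = 2 \<or> 2 < k" by arith
  then show ?thesis
    using assms by (auto simp: sum_Gn_null_mult Gn_count_def algebra_simps)
qed

lemma Gn_count_left_null_unique:
  assumes "3 < n" and null: "\<And>k. k < n \<Longrightarrow> (\<Sum>v<n. u v * real (Gn_count n v k)) = 0"
    and "v < n"
  shows "u v = u 0 * Gn_null n v"
proof -
  \<comment> \<open>Column w + 1 is supported on the rows w, ..., n - 2, whence descending induction.\<close>
  have mid: "u w = 0" if "2 \<le> w" "w < n - 1" for w
    using that
  proof (induction "n - w" arbitrary: w rule: less_induct)
    case less
    have "(\<Sum>v<n. u v * real (Gn_count n v (Suc w))) =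
        (\<Sum>v<n. if v = w then real (n - Suc w) * u w else 0)"
      using less assms(1) by (intro sum.cong) (auto simp: Gn_count_def)
    also have "\<dots> = real (n - Suc w) * u w"
      using less.prems by simp
    finally have "real (n - Suc w) * u w = 0"
      using null[of "Suc w"] less.prems by simp
    then show ?case
      using less.prems by (auto simp flip: of_nat_Suc)
  qed
  have col: "u 0 * Gn_count n 0 k + u 1 * Gn_count n 1 k + u (n - 1) * Gn_count n (n - 1) k = 0"
    if "k \<le> 1" for k
  proof -
    have "(\<Sum>v<n. u v * real (Gn_count n v k)) =
        (\<Sum>v<n. (if v = 0 then u 0 * Gn_count n 0 k else 0) + (if v = 1 then u 1 * Gn_count n 1 k else 0)
          + (if v = n - 1 then u (n - 1) * Gn_count n (n - 1) k else 0))"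
      using assms(1) mid that by (intro sum.cong) (auto simp: Gn_count_def)
    then show ?thesis
      using assms(1) null[of k] that by (simp add: sum.distrib)
  qed
  have "(1::nat) \<noteq> n - 1"
    using assms(1) by simp
  then have "u 0 + u 1 + u (n - 1) = 0" "(real n - 1) * u 0 + u 1 + 2 * u (n - 1) = 0"
    using col[of 0] col[of 1] assms(1) by (simp_all add: Gn_count_def of_nat_diff algebra_simps)
  then have "u 1 = u 0 * (real n - 3)" "u (n - 1) = u 0 * (2 - real n)"
    by (simp_all add: algebra_simps)
  then show ?thesis
    using mid[of v] assms by (auto simp: Gn_null_def)
qed

lemma Gn_count_left_null_iff:
  assumes "3 < n"
  shows "(\<forall>k<n. (\<Sum>v<n. u v * real (Gn_count n v k)) = 0) \<longleftrightarrow>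
    (\<exists>c. \<forall>v<n. u v = c * Gn_null n v)"
proof
  assume "\<forall>k<n. (\<Sum>v<n. u v * real (Gn_count n v k)) = 0"
  then show "\<exists>c. \<forall>v<n. u v = c * Gn_null n v"
    using Gn_count_left_null_unique[OF assms] by blast
next
  assume "\<exists>c. \<forall>v<n. u v = c * Gn_null n v"
  then obtain c where "\<forall>v<n. u v = c * Gn_null n v" by blast
  then have "(\<Sum>v<n. u v * real (Gn_count n v k)) = c * (\<Sum>v<n. Gn_null n v * real (Gn_count n v k))" for k
    by (auto simp: sum_distrib_left mult.assoc intro!: sum.cong)
  then show "\<forall>k<n. (\<Sum>v<n. u v * real (Gn_count n v k)) = 0"
    using sum_Gn_null_mult_Gn_count[OF assms] by simp
qed

lemma sum_atMost_backward_diff: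
  fixes g :: "nat \<Rightarrow> 'a::ab_group_add"
  shows "(\<Sum>a\<le>b. (if 0 < a then g (a - 1) else 0) - g a) = - g b"
  by (induction b) auto

lemma partial_sums_eq_iff:
  fixes f g :: "nat \<Rightarrow> 'a::ab_group_add"
  shows "(\<forall>b<n. (\<Sum>a\<le>b. f a) = (\<Sum>a\<le>b. g a)) \<longleftrightarrow> (\<forall>a<n. f a = g a)"
proof (induction n)
  case (Suc n)
  then show ?case
    by (auto simp: less_Suc_eq atMost_Suc lessThan_Suc_atMost[symmetric])
qed simp

lemma index_transpose_Xi_mat_mult_vec:
  assumes "y \<in> carrier_vec (n - 1)" "b < n"
  shows "(transpose_mat (Xi_mat n) *\<^sub>v y) $ b =
    (if 0 < b then y $ (b - 1) else 0) - (if b < n - 1 then y $ b else 0)"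
proof -
  have "(transpose_mat (Xi_mat n) *\<^sub>v y) $ b =
      (\<Sum>a<n - 1. (if a = b - 1 then of_bool (0 < b) * y $ a else 0) - (if a = b then y $ a else 0))"
    using assms by (auto simp: Xi_mat_def scalar_prod_def lessThan_atLeast0 intro!: sum.cong)
  then show ?thesis
    using assms by (auto simp: sum_subtractf)
qed

lemma transpose_Xi_mat_mult_vec_eq_iff:
  assumes "y \<in> carrier_vec (n - 1)"
  shows "transpose_mat (Xi_mat n) *\<^sub>v y = vec n z \<longleftrightarrow>
    (\<forall>b<n. (\<Sum>a\<le>b. z a) = - (if b < n - 1 then y $ b else 0))"
proof -
  let ?y = "\<lambda>b. if b < n - 1 then y $ b else 0"
  have "dim_vec (transpose_mat (Xi_mat n) *\<^sub>v y) = n"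
    by (simp add: Xi_mat_def)
  moreover have "(transpose_mat (Xi_mat n) *\<^sub>v y) $ a = (if 0 < a then ?y (a - 1) else 0) - ?y a"
    if "a < n" for a
    using index_transpose_Xi_mat_mult_vec[OF assms that] that by auto
  ultimately have "transpose_mat (Xi_mat n) *\<^sub>v y = vec n z \<longleftrightarrow>
      (\<forall>a<n. (if 0 < a then ?y (a - 1) else 0) - ?y a = z a)"
    by (simp add: vec_eq_iff)
  also have "\<dots> \<longleftrightarrow>
      (\<forall>b<n. (\<Sum>a\<le>b. (if 0 < a then ?y (a - 1) else 0) - ?y a) = (\<Sum>a\<le>b. z a))"
    by (rule partial_sums_eq_iff[symmetric])
  also have "\<dots> \<longleftrightarrow> (\<forall>b<n. - ?y b = (\<Sum>a\<le>b. z a))"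
    unfolding sum_atMost_backward_diff[of ?y] ..
  finally show ?thesis
    by (metis (no_types, lifting))
qed

lemma transpose_perm_mat_mult_vec:
  assumes "p permutes {..<n}" "w \<in> carrier_vec n"
  shows "transpose_mat (perm_mat n p) *\<^sub>v w = vec n (\<lambda>v. w $ inv_into UNIV p v)"
proof (rule eq_vecI)
  fix v assume "v < dim_vec (vec n (\<lambda>v. w $ inv_into UNIV p v))"
  then have "v < n" by simp
  then have "(transpose_mat (perm_mat n p) *\<^sub>v w) $ v = (\<Sum>a<n. (if p a = v then 1 else 0) * w $ a)"
    using assms(2) by (simp add: perm_mat_def scalar_prod_def lessThan_atLeast0)
  also have "\<dots> = (\<Sum>a<n. if inv_into UNIV p v = a then w $ a else 0)"
    by (intro sum.cong) (simp_all add: permutes_inv_eq[OF assms(1)])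
  also have "\<dots> = w $ inv_into UNIV p v"
    using \<open>v < n\<close> permutes_in_image[OF permutes_inv[OF assms(1)]] by simp
  finally show "(transpose_mat (perm_mat n p) *\<^sub>v w) $ v = vec n (\<lambda>v. w $ inv_into UNIV p v) $ v"
    using \<open>v < n\<close> by simp
qed (simp add: perm_mat_def)

lemma index_transpose_dist_count_mat_Gn_arcs_mult_vec:
  assumes "3 < n" "u \<in> carrier_vec n" "k < n"
  shows "(transpose_mat (dist_count_mat n (Gn_arcs n)) *\<^sub>v u) $ k =
    (\<Sum>v<n. u $ v * real (Gn_count n v k))"
proof -
  have "dim_row (dist_count_mat n (Gn_arcs n)) = n" "dim_col (dist_count_mat n (Gn_arcs n)) = n"
    by (simp_all add: dist_count_mat_def)
  then show ?thesis
    using assms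
    by (auto simp: dist_count_mat_Gn_arcs scalar_prod_def lessThan_atLeast0 mult.commute intro!: sum.cong)
qed

definition Gn_step :: "nat \<Rightarrow> (nat \<Rightarrow> nat) \<Rightarrow> nat \<Rightarrow> real" where
  "Gn_step n r b =
     of_bool (r 0 \<le> b) + (real n - 3) * of_bool (r 1 \<le> b) - (real n - 2) * of_bool (r (n - 1) \<le> b)"

lemma sum_Gn_null_permutes:
  assumes "p permutes {..<n}"
  shows "(\<Sum>a\<le>b. Gn_null n (p a)) = Gn_step n (inv_into UNIV p) b"
proof -
  have "(\<Sum>a\<le>b. Gn_null n (p a)) =
      (\<Sum>a\<le>b. (if inv_into UNIV p 0 = a then 1 else 0) + (real n - 3) * (if inv_into UNIV p 1 = a then 1 else 0)
        - (real n - 2) * (if inv_into UNIV p (n - 1) = a then 1 else 0))"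
    by (intro sum.cong) (auto simp: Gn_null_def permutes_inv_eq[OF assms])
  then show ?thesis
    by (simp add: Gn_step_def sum.distrib sum_subtractf sum_distrib_left[symmetric])
qed

lemma Gn_step_eq_0:
  assumes "p permutes {..<n}" "1 < n" "n - 1 \<le> b"
  shows "Gn_step n (inv_into UNIV p) b = 0"
proof -
  have "inv_into UNIV p v \<le> b" if "v < n" for v
    using permutes_in_image[OF permutes_inv[OF assms(1)], of v] that assms(3) by simp
  then show ?thesis
    using assms(2) by (simp add: Gn_step_def)
qed

lemma transpose_Xi_mat_mult_vec_eq_Gn_null_iff:
  assumes "1 < n" "p permutes {..<n}" "y \<in> carrier_vec (n - 1)"
  shows "(\<exists>c. transpose_mat (Xi_mat n) *\<^sub>v y = vec n (\<lambda>a. c * Gn_null n (p a)))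
     \<longleftrightarrow> (\<exists>t. \<forall>b<n - 1. y $ b = t * Gn_step n (inv_into UNIV p) b)"
proof -
  let ?r = "inv_into UNIV p"
  have "(\<exists>c. transpose_mat (Xi_mat n) *\<^sub>v y = vec n (\<lambda>a. c * Gn_null n (p a)))
      \<longleftrightarrow> (\<exists>c. \<forall>b<n. c * Gn_step n ?r b = - (if b < n - 1 then y $ b else 0))"
    unfolding transpose_Xi_mat_mult_vec_eq_iff[OF assms(3)]
    by (simp add: sum_distrib_left[symmetric] sum_Gn_null_permutes[OF assms(2)])
  also have "\<dots> \<longleftrightarrow> (\<exists>t. \<forall>b<n - 1. y $ b = t * Gn_step n ?r b)"
  proof
    assume "\<exists>c. \<forall>b<n. c * Gn_step n ?r b = - (if b < n - 1 then y $ b else 0)"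
    then obtain c where "\<forall>b<n. c * Gn_step n ?r b = - (if b < n - 1 then y $ b else 0)" by blast
    then have "\<forall>b<n - 1. y $ b = - c * Gn_step n ?r b" by force
    then show "\<exists>t. \<forall>b<n - 1. y $ b = t * Gn_step n ?r b" by blast
  next
    assume "\<exists>t. \<forall>b<n - 1. y $ b = t * Gn_step n ?r b"
    then obtain t where "\<forall>b<n - 1. y $ b = t * Gn_step n ?r b" by blast
    then have "\<forall>b<n. - t * Gn_step n ?r b = - (if b < n - 1 then y $ b else 0)"
      using Gn_step_eq_0[OF assms(2,1)] by auto
    then show "\<exists>c. \<forall>b<n. c * Gn_step n ?r b = - (if b < n - 1 then y $ b else 0)" by blast
  qed
  finally show ?thesis .
qed

lemma transpose_Xi_perm_mat_mult_vec:
  assumes "p permutes {..<n}" "C \<in> carrier_mat n m" "y \<in> carrier_vec (n - 1)"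
  shows "transpose_mat (Xi_mat n * perm_mat n p * C) *\<^sub>v y =
    transpose_mat C *\<^sub>v vec n (\<lambda>v. (transpose_mat (Xi_mat n) *\<^sub>v y) $ inv_into UNIV p v)"
proof -
  have Xi: "Xi_mat n \<in> carrier_mat (n - 1) n" and R: "perm_mat n p \<in> carrier_mat n n"
    by (simp_all add: Xi_mat_def perm_mat_def)
  have "transpose_mat (Xi_mat n * perm_mat n p * C) =
      transpose_mat C * (transpose_mat (perm_mat n p) * transpose_mat (Xi_mat n))"
    using transpose_mult[OF mult_carrier_mat[OF Xi R] assms(2)] transpose_mult[OF Xi R] by simp
  then have "transpose_mat (Xi_mat n * perm_mat n p * C) *\<^sub>v y =
      transpose_mat C *\<^sub>v (transpose_mat (perm_mat n p) *\<^sub>v (transpose_mat (Xi_mat n) *\<^sub>v y))"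
    using Xi R assms(2,3)
    by (simp add: assoc_mult_mat_vec[of _ m n _ "n - 1"] assoc_mult_mat_vec[of _ n n _ "n - 1"])
  also have "\<dots> =
      transpose_mat C *\<^sub>v vec n (\<lambda>v. (transpose_mat (Xi_mat n) *\<^sub>v y) $ inv_into UNIV p v)"
    using Xi assms(3) by (simp add: transpose_perm_mat_mult_vec[OF assms(1)])
  finally show ?thesis .
qed

lemma Gn_kernel_iff:
  assumes "3 < n" "p permutes {..<n}" "y \<in> carrier_vec (n - 1)"
  shows "transpose_mat (Xi_mat n * perm_mat n p * dist_count_mat n (Gn_arcs n)) *\<^sub>v y = 0\<^sub>v n
     \<longleftrightarrow> (\<exists>t. \<forall>b<n - 1. y $ b = t * Gn_step n (inv_into UNIV p) b)"
proof -
  let ?C = "dist_count_mat n (Gn_arcs n)"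
  define w where "w = transpose_mat (Xi_mat n) *\<^sub>v y"
  have C: "?C \<in> carrier_mat n n" and Xi: "Xi_mat n \<in> carrier_mat (n - 1) n"
    by (simp_all add: dist_count_mat_def Xi_mat_def)
  have w: "w \<in> carrier_vec n"
    unfolding w_def using Xi assms(3) by simp
  have "transpose_mat (Xi_mat n * perm_mat n p * ?C) *\<^sub>v y = 0\<^sub>v n
      \<longleftrightarrow> (\<forall>k<n. (\<Sum>v<n. w $ inv_into UNIV p v * real (Gn_count n v k)) = 0)"
    using index_transpose_dist_count_mat_Gn_arcs_mult_vec[OF assms(1)] C
    by (auto simp: transpose_Xi_perm_mat_mult_vec[OF assms(2) C assms(3)] w_def[symmetric] vec_eq_iff)
  also have "\<dots> \<longleftrightarrow> (\<exists>c. \<forall>v<n. w $ inv_into UNIV p v = c * Gn_null n v)"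
    by (rule Gn_count_left_null_iff[OF assms(1)])
  also have "\<dots> \<longleftrightarrow> (\<exists>c. \<forall>a<n. w $ a = c * Gn_null n (p a))"
  proof -
    have "(\<forall>v<n. w $ inv_into UNIV p v = c * Gn_null n v) \<longleftrightarrow>
        (\<forall>a<n. w $ a = c * Gn_null n (p a))" for c
      using assms(2) by (metis lessThan_iff permutes_in_image permutes_inv permutes_inverses)
    then show ?thesis by simp
  qed
  also have "\<dots> \<longleftrightarrow> (\<exists>c. w = vec n (\<lambda>a. c * Gn_null n (p a)))"
    using w by (simp add: vec_eq_iff)
  also have "\<dots> \<longleftrightarrow> (\<exists>t. \<forall>b<n - 1. y $ b = t * Gn_step n (inv_into UNIV p) b)"
    unfolding w_def using assms by (intro transpose_Xi_mat_mult_vec_eq_Gn_null_iff) simp_all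
  finally show ?thesis .
qed

lemma Gn_nonneg_kernel_vec_iff:
  assumes "3 < n" "p permutes {..<n}"
  shows "(\<exists>y \<in> carrier_vec (n - 1).
           transpose_mat (Xi_mat n * perm_mat n p * dist_count_mat n (Gn_arcs n)) *\<^sub>v y = 0\<^sub>v n
         \<and> (\<forall>i < n - 1. y $ i \<ge> 0) \<and> y \<noteq> 0\<^sub>v (n - 1))
    \<longleftrightarrow> (\<exists>t. (\<forall>x<n - 1. 0 \<le> t * Gn_step n (inv_into UNIV p) x)
          \<and> (\<exists>x<n - 1. t * Gn_step n (inv_into UNIV p) x \<noteq> 0))"
    (is "(\<exists>y \<in> carrier_vec (n - 1). ?kernel y \<and> ?pos y) \<longleftrightarrow> (\<exists>t. ?nonneg t \<and> ?nonzero t)")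
proof
  assume "\<exists>y \<in> carrier_vec (n - 1). ?kernel y \<and> ?pos y"
  then obtain y where y: "y \<in> carrier_vec (n - 1)" "?kernel y" "\<forall>i < n - 1. y $ i \<ge> 0" "y \<noteq> 0\<^sub>v (n - 1)"
    by blast
  then obtain t where "\<forall>b<n - 1. y $ b = t * Gn_step n (inv_into UNIV p) b"
    using Gn_kernel_iff[OF assms] by blast
  moreover have "\<exists>x<n - 1. y $ x \<noteq> 0"
    using y(1,4) by (auto simp: vec_eq_iff)
  ultimately have "?nonneg t \<and> ?nonzero t"
    using y(3) by auto
  then show "\<exists>t. ?nonneg t \<and> ?nonzero t" ..
next
  assume "\<exists>t. ?nonneg t \<and> ?nonzero t"
  then obtain t where "?nonneg t" "?nonzero t" by blast
  define y where "y = vec (n - 1) (\<lambda>b. t * Gn_step n (inv_into UNIV p) b)"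
  have "y \<in> carrier_vec (n - 1)" "?kernel y"
    using Gn_kernel_iff[OF assms, of y] by (auto simp: y_def)
  moreover have "\<forall>i < n - 1. y $ i \<ge> 0" "y \<noteq> 0\<^sub>v (n - 1)"
    using \<open>?nonneg t\<close> \<open>?nonzero t\<close> by (auto simp: y_def vec_eq_iff)
  ultimately show "\<exists>y \<in> carrier_vec (n - 1). ?kernel y \<and> ?pos y"
    by blast
qed

lemma step_sign_definite_iff:
  fixes a b c m :: nat and \<alpha> \<beta> :: real and f :: "nat \<Rightarrow> real"
  assumes f: "\<And>x. f x = \<alpha> * of_bool (a \<le> x) + \<beta> * of_bool (b \<le> x) - (\<alpha> + \<beta>) * of_bool (c \<le> x)"
    and "0 < \<alpha>" "0 < \<beta>" and "a \<noteq> b" "a \<noteq> c" "b \<noteq> c" and "a \<le> m" "b \<le> m" "c \<le> m"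
  shows "(\<exists>t. (\<forall>x<m. 0 \<le> t * f x) \<and> (\<exists>x<m. t * f x \<noteq> 0)) \<longleftrightarrow>
    \<not> (a < c \<and> c < b \<or> b < c \<and> c < a)"
proof
  assume "\<exists>t. (\<forall>x<m. 0 \<le> t * f x) \<and> (\<exists>x<m. t * f x \<noteq> 0)"
  then obtain t where nonneg: "\<forall>x<m. 0 \<le> t * f x" and "t \<noteq> 0" by auto
  have pos: "0 < t" if "x < m" "0 < f x" for x
    using nonneg[rule_format, OF that(1)] \<open>t \<noteq> 0\<close> that(2) by (auto simp: zero_le_mult_iff)
  have neg: "t < 0" if "x < m" "f x < 0" for x
    using nonneg[rule_format, OF that(1)] \<open>t \<noteq> 0\<close> that(2) by (auto simp: zero_le_mult_iff)
  show "\<not> (a < c \<and> c < b \<or> b < c \<and> c < a)"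
  proof
    assume "a < c \<and> c < b \<or> b < c \<and> c < a"
    then show False
    proof
      assume "a < c \<and> c < b"
      then have "0 < f a" "f c < 0" "a < m" "c < m"
        using assms by (auto simp: f)
      then show False
        using pos neg by fastforce
    next
      assume "b < c \<and> c < a"
      then have "0 < f b" "f c < 0" "b < m" "c < m"
        using assms by (auto simp: f)
      then show False
        using pos neg by fastforce
    qed
  qed
next
  assume "\<not> (a < c \<and> c < b \<or> b < c \<and> c < a)"
  then have "c < a \<and> c < b \<or> a < c \<and> b < c"
    using assms by linarith
  then show "\<exists>t. (\<forall>x<m. 0 \<le> t * f x) \<and> (\<exists>x<m. t * f x \<noteq> 0)"
  proof
    assume "c < a \<and> c < b"
    then have "\<forall>x. f x \<le> 0" "f c < 0" "c < m"
      using assms by (auto simp: f)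
    then show ?thesis
      by (intro exI[of _ "-1"]) auto
  next
    assume "a < c \<and> b < c"
    then have "\<forall>x. 0 \<le> f x" "0 < f a" "a < m"
      using assms by (auto simp: f)
    then show ?thesis
      by (intro exI[of _ 1]) (auto intro!: exI[of _ a])
  qed
qed

theorem theorem7:
  fixes n :: nat and p :: "nat \<Rightarrow> nat"
  assumes "n > 3"
    and "p permutes {..<n}"
  shows "(let r = inv_into UNIV p in
            (r 0 < r (n - 1) \<and> r (n - 1) < r 1) \<or> (r 1 < r (n - 1) \<and> r (n - 1) < r 0))
     \<longleftrightarrow>
     \<not> (\<exists>y \<in> carrier_vec (n - 1).
           transpose_mat (Xi_mat n * perm_mat n p * dist_count_mat n (Gn_arcs n)) *\<^sub>v y = 0\<^sub>v n
         \<and> (\<forall>i < n - 1. y $ i \<ge> 0) \<and> y \<noteq> 0\<^sub>v (n - 1))"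
proof -
  let ?r = "inv_into UNIV p"
  have r_perm: "?r permutes {..<n}"
    using permutes_inv[OF assms(2)] .
  have step: "Gn_step n ?r x = 1 * of_bool (?r 0 \<le> x) + (real n - 3) * of_bool (?r 1 \<le> x)
      - (1 + (real n - 3)) * of_bool (?r (n - 1) \<le> x)" for x
    by (simp add: Gn_step_def)
  have "?r 0 \<noteq> ?r 1" "?r 0 \<noteq> ?r (n - 1)" "?r 1 \<noteq> ?r (n - 1)"
    using assms(1) by (simp_all add: inj_eq[OF permutes_inj[OF r_perm]])
  moreover have "?r v \<le> n - 1" if "v < n" for v
    using permutes_in_image[OF r_perm, of v] that by simp
  ultimately have "(\<exists>t. (\<forall>x<n - 1. 0 \<le> t * Gn_step n ?r x) \<and> (\<exists>x<n - 1. t * Gn_step n ?r x \<noteq> 0))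
      \<longleftrightarrow> \<not> (?r 0 < ?r (n - 1) \<and> ?r (n - 1) < ?r 1 \<or> ?r 1 < ?r (n - 1) \<and> ?r (n - 1) < ?r 0)"
    using assms(1) by (intro step_sign_definite_iff[OF step]) simp_all
  then show ?thesis
    unfolding Gn_nonneg_kernel_vec_iff[OF assms] Let_def by blast
qed

end
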